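(* Let $\alpha>1$ and let $u_0:[0,\infty)\to[0,\infty)$ be bounded and integrable with $u_0^{\alpha-1}$ Lipschitz continuous; let $m_0(\rho)=\int_0^\rho u_0$ and $P_t(\rho_0)=\rho_0+\alpha\, m_0(\rho_0)\,u_0(\rho_0)^{\alpha-1}\,t$. Then there exists $T>0$ such that for every $t\in[0,T]$ the map $P_t$ is a bi-Lipschitz bijection of $[0,\infty)$, and the function $$u(t,\rho)=\begin{cases}\big(u_0(P_t^{-1}(\rho))^{-\alpha}+\alpha t\big)^{-1/\alpha}, & u_0(P_t^{-1}(\rho))\neq 0,\\ 0,& u_0(P_t^{-1}(\rho))=0,\end{cases}$$ is continuous, so that $m(t,\rho)=\int_0^\rho u(t,\sigma)\,d\sigma$ is a classical ($C^1$) solution of $m_t+m(m_\rho)^\alpha=0$ on $(0,T]\times(0,\infty)$ with $m(0,\cdot)=m_0$, $m(t,0)=0$. (One may take any $T<1/(\alpha L)$ with $L=\sup_{\rho_0\ge0}\big|u_0^\alpha+m_0\,\frac{d}{d\rho_0}(u_0^{\alpha-1})\big|$.)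
   Context: Radially symmetric densities are written as functions of a volume variable $\rho\ge0$, and the mass function is $m(t,\rho)=\int_0^\rho u(t,\sigma)\,d\sigma$, so $u=m_\rho$. The mass equation is $m_t+m(m_\rho)^\alpha=0$. A classical solution is a $C^1$ function satisfying this equation pointwise; "given by characteristics" refers to the explicit formula above. *)

theory Defs
  imports "HOL-Analysis.Analysis"
begin

definition mass0 :: "(real \<Rightarrow> real) \<Rightarrow> real \<Rightarrow> real" where
  "mass0 u0 \<rho> = integral {0..\<rho>} u0"

definition charmap :: "real \<Rightarrow> (real \<Rightarrow> real) \<Rightarrow> real \<Rightarrow> real \<Rightarrow> real" where
  "charmap \<alpha> u0 t \<rho>0 = \<rho>0 + \<alpha> * mass0 u0 \<rho>0 * (u0 \<rho>0) powr (\<alpha> - 1) * t"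

definition charsol :: "real \<Rightarrow> (real \<Rightarrow> real) \<Rightarrow> real \<Rightarrow> real \<Rightarrow> real" where
  "charsol \<alpha> u0 t \<rho> =
     (let v = u0 (inv_into {0..} (charmap \<alpha> u0 t) \<rho>)
      in if v \<noteq> 0 then (v powr (- \<alpha>) + \<alpha> * t) powr (- 1 / \<alpha>) else 0)"

definition mass :: "(real \<Rightarrow> real \<Rightarrow> real) \<Rightarrow> real \<Rightarrow> real \<Rightarrow> real" where
  "mass u t \<rho> = integral {0..\<rho>} (u t)"

definition bilipschitz_on :: "real set \<Rightarrow> (real \<Rightarrow> real) \<Rightarrow> bool" where
  "bilipschitz_on S f \<longleftrightarrow> (\<exists>c C. 0 < c \<and> (\<forall>x\<in>S. \<forall>y\<in>S.
       c * dist x y \<le> dist (f x) (f y) \<and> dist (f x) (f y) \<le> C * dist x y))"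

definition classical_solution_on ::
    "real \<Rightarrow> (real \<times> real) set \<Rightarrow> (real \<Rightarrow> real \<Rightarrow> real) \<Rightarrow> bool" where
  "classical_solution_on \<alpha> S m \<longleftrightarrow>
     (\<exists>mt m\<rho>. continuous_on S mt \<and> continuous_on S m\<rho> \<and>
        (\<forall>p\<in>S. ((\<lambda>(t, \<rho>). m t \<rho>) has_derivative (\<lambda>(h, k). mt p * h + m\<rho> p * k))
                   (at p within S)) \<and>
        (\<forall>p\<in>S. mt p + m (fst p) (snd p) * (m\<rho> p) powr \<alpha> = 0))"

end

theory Submission
  imports Defs
begin

(*
  For t \<le> T0 the characteristic map P t differs from the identity by a map with Lipschitz
  constant 1/2, so it is a bi-Lipschitz bijection of [0,\<infinity>) whose inverse Q is Lipschitz
  jointly in (t, \<rho>). Along the characteristic through s the density is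
  (u0(s)^-\<alpha> + \<alpha> t)^(-1/\<alpha>) and the mass is m0(s) (1 + \<alpha> t u0(s)^\<alpha>)^((\<alpha>-1)/\<alpha>).
  Because u0^(\<alpha>-1) is only Lipschitz, this mass M(t, \<rho>) is written as
  Psi((t, \<rho>), (Q, u0(Q)^(\<alpha>-1))) with Psi differentiable and with vanishing partial
  derivative in the second argument at that point; composing with the Lipschitz map
  (t, \<rho>) \<mapsto> (Q, u0(Q)^(\<alpha>-1)) then gives \<partial>\<^sub>\<rho> M = u and \<partial>\<^sub>t M = - M u^\<alpha>, and
  integrating in \<rho> identifies M with the mass of u.
*)

lemma has_derivative_along_lipschitz_graph:
  fixes \<Psi> :: "'a::real_normed_vector \<times> 'b::real_normed_vector \<Rightarrow> 'c::real_normed_vector"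
  assumes \<Psi>: "(\<Psi> has_derivative (\<lambda>z. L (fst z))) (at (x, y x))"
    and L: "bounded_linear L"
    and K: "K \<ge> 0" "\<forall>x'\<in>S. norm (y x' - y x) \<le> K * norm (x' - x)"
  shows "((\<lambda>x. \<Psi> (x, y x)) has_derivative L) (at x within S)"
  unfolding has_derivative_within_alt
proof (intro conjI allI impI L)
  fix e :: real assume "e > 0"
  then have e': "e / (1 + K) > 0" using K by auto
  with \<Psi>[unfolded has_derivative_at_alt] obtain d where d: "d > 0"
    "\<And>z. norm (z - (x, y x)) < d \<Longrightarrow>
       norm (\<Psi> z - \<Psi> (x, y x) - L (fst (z - (x, y x)))) \<le> e / (1 + K) * norm (z - (x, y x))"
    by blast
  show "\<exists>d>0. \<forall>x'\<in>S. norm (x' - x) < d \<longrightarrow>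
          norm (\<Psi> (x', y x') - \<Psi> (x, y x) - L (x' - x)) \<le> e * norm (x' - x)"
  proof (intro exI[of _ "d / (1 + K)"] conjI ballI impI)
    show "d / (1 + K) > 0" using d K by auto
    fix x' assume x': "x' \<in> S" "norm (x' - x) < d / (1 + K)"
    have "norm ((x', y x') - (x, y x)) \<le> norm (x' - x) + norm (y x' - y x)"
      using norm_Pair_le[of "x' - x" "y x' - y x"] by simp
    also have "\<dots> \<le> (1 + K) * norm (x' - x)" using K x' by (simp add: algebra_simps)
    finally have graph: "norm ((x', y x') - (x, y x)) \<le> (1 + K) * norm (x' - x)" .
    moreover have "(1 + K) * norm (x' - x) < d" using x' K by (simp add: field_simps)
    ultimately have "norm (\<Psi> (x', y x') - \<Psi> (x, y x) - L (x' - x))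
        \<le> e / (1 + K) * norm ((x', y x') - (x, y x))"
      using d(2) by fastforce
    also have "\<dots> \<le> e / (1 + K) * ((1 + K) * norm (x' - x))"
      using graph e' by (intro mult_left_mono) auto
    also have "\<dots> = e * norm (x' - x)" using K by (simp add: field_simps)
    finally show "norm (\<Psi> (x', y x') - \<Psi> (x, y x) - L (x' - x)) \<le> e * norm (x' - x)" .
  qed
qed

definition pos_powr :: "real \<Rightarrow> real \<Rightarrow> real" where
  "pos_powr \<beta> x = (if x \<le> 0 then 0 else x powr \<beta>)"

lemma pos_powr_nonneg: "pos_powr \<beta> x \<ge> 0"
  by (simp add: pos_powr_def)

lemma pos_powr_has_real_derivative_0:
  assumes "\<beta> > 1"
  shows "(pos_powr \<beta> has_real_derivative 0) (at 0)"
proof -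
  have lim: "((\<lambda>x. \<bar>x\<bar> powr (\<beta> - 1)) \<longlongrightarrow> 0) (at 0)"
    using assms by (intro tendsto_eq_intros) (auto intro: tendsto_eq_intros)
  have "norm ((pos_powr \<beta> x - pos_powr \<beta> 0) / (x - 0)) \<le> \<bar>x\<bar> powr (\<beta> - 1)" for x
  proof (cases "x > 0")
    case True
    then show ?thesis using powr_diff[of x \<beta> 1] by (simp add: pos_powr_def)
  qed (simp add: pos_powr_def)
  then have "((\<lambda>x. (pos_powr \<beta> x - pos_powr \<beta> 0) / (x - 0)) \<longlongrightarrow> 0) (at 0)"
    by (intro Lim_null_comparison[OF always_eventually lim]) blast
  then show ?thesis by (simp add: has_field_derivative_iff)
qed

lemma pos_powr_has_real_derivative:
  assumes "\<beta> > 1"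
  shows "(pos_powr \<beta> has_real_derivative (if x \<le> 0 then 0 else \<beta> * x powr (\<beta> - 1))) (at x)"
proof -
  consider "x > 0" | "x < 0" | "x = 0" by linarith
  then show ?thesis
  proof cases
    case 1
    have "((\<lambda>x. x powr \<beta>) has_real_derivative \<beta> * x powr (\<beta> - 1)) (at x)"
      using 1 by (auto intro!: derivative_eq_intros)
    then have "(pos_powr \<beta> has_real_derivative \<beta> * x powr (\<beta> - 1)) (at x)"
      by (rule has_field_derivative_transform_within_open[where S="{0<..}"])
         (use 1 in \<open>auto simp: pos_powr_def\<close>)
    then show ?thesis using 1 by simp
  next
    case 2
    have "((\<lambda>_. 0) has_real_derivative 0) (at x)" by simp
    then have "(pos_powr \<beta> has_real_derivative 0) (at x)"
      by (rule has_field_derivative_transform_within_open[where S="{..<0}"])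
         (use 2 in \<open>auto simp: pos_powr_def\<close>)
    then show ?thesis using 2 by simp
  qed (use pos_powr_has_real_derivative_0[OF assms] in simp)
qed

locale characteristics =
  fixes \<alpha> :: real and u0 :: "real \<Rightarrow> real" and B Lg Mb :: real
  assumes alpha_gt_1: "\<alpha> > 1"
    and u0_nonneg: "\<And>\<rho>. \<rho> \<ge> 0 \<Longrightarrow> 0 \<le> u0 \<rho>"
    and u0_le: "\<And>\<rho>. \<rho> \<ge> 0 \<Longrightarrow> u0 \<rho> \<le> B"
    and u0_powr_lipschitz: "Lg-lipschitz_on {0..} (\<lambda>\<rho>. u0 \<rho> powr (\<alpha> - 1))"
    and mass0_le: "\<And>\<rho>. \<rho> \<ge> 0 \<Longrightarrow> mass0 u0 \<rho> \<le> Mb"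
begin

definition g :: "real \<Rightarrow> real" where "g \<rho> = u0 \<rho> powr (\<alpha> - 1)"

abbreviation m0 :: "real \<Rightarrow> real" where "m0 \<equiv> mass0 u0"

lemma Lg_nonneg: "0 \<le> Lg"
  using lipschitz_on_nonneg[OF u0_powr_lipschitz] .

lemma B_nonneg: "0 \<le> B"
  using u0_nonneg[of 0] u0_le[of 0] by simp

lemma g_lipschitz: "x \<ge> 0 \<Longrightarrow> y \<ge> 0 \<Longrightarrow> \<bar>g x - g y\<bar> \<le> Lg * \<bar>x - y\<bar>"
  using u0_powr_lipschitz unfolding lipschitz_on_def g_def dist_real_def by auto

lemma continuous_on_g: "continuous_on {0..} g"
  using lipschitz_on_continuous_on[OF u0_powr_lipschitz] unfolding g_def[abs_def] .

lemma g_nonneg: "0 \<le> g x"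
  by (simp add: g_def)

lemma g_le: "x \<ge> 0 \<Longrightarrow> g x \<le> B powr (\<alpha> - 1)"
  unfolding g_def using u0_nonneg u0_le alpha_gt_1 by (intro powr_mono2) auto

lemma continuous_on_u0: "continuous_on {0..} u0"
proof -
  have "continuous_on {0..} (\<lambda>x. g x powr (1 / (\<alpha> - 1)))"
    using alpha_gt_1 g_nonneg by (intro continuous_on_powr' continuous_on_g continuous_on_const) auto
  moreover have "x \<ge> 0 \<Longrightarrow> g x powr (1 / (\<alpha> - 1)) = u0 x" for x
    using alpha_gt_1 u0_nonneg[of x] by (simp add: g_def powr_powr)
  ultimately show ?thesis
    by (rule continuous_on_eq) auto
qed

lemma u0_integrable_on: "0 \<le> a \<Longrightarrow> u0 integrable_on {a..b}"
  by (rule integrable_continuous_real, rule continuous_on_subset[OF continuous_on_u0]) auto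

lemma m0_0 [simp]: "m0 0 = 0"
  by (simp add: mass0_def)

lemma m0_nonneg: "x \<ge> 0 \<Longrightarrow> 0 \<le> m0 x"
  unfolding mass0_def using u0_integrable_on[of 0 x] u0_nonneg by (intro integral_nonneg) auto

lemma Mb_nonneg: "0 \<le> Mb"
  using mass0_le[of 0] by simp

lemma m0_increment_bounds:
  assumes "0 \<le> y" "y \<le> x"
  shows "0 \<le> m0 x - m0 y" "m0 x - m0 y \<le> B * (x - y)"
proof -
  have eq: "m0 x - m0 y = integral {y..x} u0"
    using Henstock_Kurzweil_Integration.integral_combine[OF assms u0_integrable_on[of 0 x]]
    by (simp add: mass0_def)
  show "0 \<le> m0 x - m0 y"
    unfolding eq using u0_integrable_on[of y x] u0_nonneg assms by (intro integral_nonneg) auto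
  have "integral {y..x} u0 \<le> integral {y..x} (\<lambda>_. B)"
    using u0_integrable_on[of y x] u0_le assms by (intro integral_le) auto
  then show "m0 x - m0 y \<le> B * (x - y)" using assms by (simp add: eq mult.commute)
qed

lemma m0_lipschitz: "x \<ge> 0 \<Longrightarrow> y \<ge> 0 \<Longrightarrow> \<bar>m0 x - m0 y\<bar> \<le> B * \<bar>x - y\<bar>"
  using m0_increment_bounds[of x y] m0_increment_bounds[of y x]
  by (cases "y \<le> x") (auto simp: algebra_simps)

lemma continuous_on_m0: "continuous_on {0..} m0"
proof -
  have "B-lipschitz_on {0..} m0"
    unfolding lipschitz_on_def dist_real_def using m0_lipschitz B_nonneg by auto
  then show ?thesis by (rule lipschitz_on_continuous_on)
qed

lemma m0_has_real_derivative: "s > 0 \<Longrightarrow> (m0 has_real_derivative u0 s) (at s)"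
  using integral_has_real_derivative[OF continuous_on_subset[OF continuous_on_u0], of 0 "s + 1" s]
  by (simp add: mass0_def[abs_def] at_within_interior[of s "{0..s+1}"])

section \<open>The characteristic map\<close>

definition speed :: "real \<Rightarrow> real" where "speed s = m0 s * g s"

definition speed_lip :: real where "speed_lip = B * B powr (\<alpha> - 1) + Mb * Lg"

lemma speed_nonneg: "x \<ge> 0 \<Longrightarrow> 0 \<le> speed x"
  by (simp add: speed_def m0_nonneg g_nonneg)

lemma speed_le: "x \<ge> 0 \<Longrightarrow> speed x \<le> Mb * B powr (\<alpha> - 1)"
  unfolding speed_def using m0_nonneg mass0_le g_nonneg g_le Mb_nonneg by (intro mult_mono) auto

lemma speed_lip_nonneg: "0 \<le> speed_lip"
  unfolding speed_lip_def using B_nonneg Mb_nonneg Lg_nonneg by simp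

lemma speed_lipschitz:
  assumes "x \<ge> 0" "y \<ge> 0"
  shows "\<bar>speed x - speed y\<bar> \<le> speed_lip * \<bar>x - y\<bar>"
proof -
  have "speed x - speed y = (m0 x - m0 y) * g x + m0 y * (g x - g y)"
    by (simp add: speed_def algebra_simps)
  then have "\<bar>speed x - speed y\<bar> \<le> \<bar>m0 x - m0 y\<bar> * \<bar>g x\<bar> + \<bar>m0 y\<bar> * \<bar>g x - g y\<bar>"
    by (metis abs_mult abs_triangle_ineq)
  also have "\<dots> \<le> (B * \<bar>x - y\<bar>) * B powr (\<alpha> - 1) + Mb * (Lg * \<bar>x - y\<bar>)"
    using assms m0_lipschitz g_nonneg g_le m0_nonneg mass0_le g_lipschitz B_nonneg Mb_nonneg
    by (intro add_mono mult_mono) auto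
  finally show ?thesis by (simp add: speed_lip_def algebra_simps)
qed

abbreviation P :: "real \<Rightarrow> real \<Rightarrow> real" where "P t \<equiv> charmap \<alpha> u0 t"

lemma P_eq: "P t s = s + \<alpha> * speed s * t"
  by (simp add: charmap_def speed_def g_def)

lemma P_0 [simp]: "P t 0 = 0"
  by (simp add: P_eq speed_def)

lemma P_ge: "0 \<le> t \<Longrightarrow> x \<ge> 0 \<Longrightarrow> x \<le> P t x"
  using speed_nonneg[of x] alpha_gt_1 by (simp add: P_eq)

definition T0 :: real where "T0 = 1 / (2 * \<alpha> * (speed_lip + 1))"

lemma T0_pos: "T0 > 0"
  using alpha_gt_1 speed_lip_nonneg by (simp add: T0_def)

lemma P_minus_id_lipschitz:
  assumes "0 \<le> t" "t \<le> T0" "x \<ge> 0" "y \<ge> 0"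
  shows "\<bar>(P t x - P t y) - (x - y)\<bar> \<le> \<bar>x - y\<bar> / 2"
proof -
  have "\<alpha> * t * speed_lip \<le> \<alpha> * T0 * speed_lip"
    using assms alpha_gt_1 speed_lip_nonneg by (intro mult_right_mono) auto
  also have "\<dots> = speed_lip / (2 * (speed_lip + 1))"
    using alpha_gt_1 speed_lip_nonneg by (simp add: T0_def)
  also have "\<dots> \<le> 1 / 2"
    using speed_lip_nonneg by (simp add: field_simps)
  finally have small: "\<alpha> * t * speed_lip \<le> 1 / 2" .
  have "\<bar>(P t x - P t y) - (x - y)\<bar> = \<alpha> * t * \<bar>speed x - speed y\<bar>"
    using assms alpha_gt_1 by (simp add: P_eq abs_mult flip: right_diff_distrib left_diff_distrib)
  also have "\<dots> \<le> (\<alpha> * t * speed_lip) * \<bar>x - y\<bar>"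
    using assms alpha_gt_1 speed_lipschitz by (simp add: mult.assoc mult_left_mono)
  also have "\<dots> \<le> \<bar>x - y\<bar> / 2" using mult_right_mono[OF small abs_ge_zero] by simp
  finally show ?thesis .
qed

lemma P_bilipschitz_bounds:
  assumes "0 \<le> t" "t \<le> T0" "x \<ge> 0" "y \<ge> 0"
  shows "\<bar>x - y\<bar> / 2 \<le> \<bar>P t x - P t y\<bar>" "\<bar>P t x - P t y\<bar> \<le> 3 / 2 * \<bar>x - y\<bar>"
proof -
  note near = P_minus_id_lipschitz[OF assms]
  show "\<bar>x - y\<bar> / 2 \<le> \<bar>P t x - P t y\<bar>" using near by (auto simp: abs_if split: if_split_asm)
  show "\<bar>P t x - P t y\<bar> \<le> 3 / 2 * \<bar>x - y\<bar>" using near by (auto simp: abs_if split: if_split_asm)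
qed

lemma bilipschitz_on_P: "0 \<le> t \<Longrightarrow> t \<le> T0 \<Longrightarrow> bilipschitz_on {0..} (P t)"
  unfolding bilipschitz_on_def dist_real_def
  by (rule exI[of _ "1/2"], rule exI[of _ "3/2"]) (use P_bilipschitz_bounds in auto)

lemma inj_on_P: "0 \<le> t \<Longrightarrow> t \<le> T0 \<Longrightarrow> inj_on (P t) {0..}"
  by (rule inj_onI) (use P_bilipschitz_bounds(1) in fastforce)

lemma bij_betw_P:
  assumes "0 \<le> t" "t \<le> T0"
  shows "bij_betw (P t) {0..} {0..}"
  unfolding bij_betw_def
proof (intro conjI inj_on_P[OF assms] equalityI subsetI)
  fix y assume "y \<in> P t ` {0..}"
  then show "y \<in> {0..}" using P_ge assms by force
next
  fix y :: real assume y: "y \<in> {0..}"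
  have cont: "continuous_on {0..} (P t)"
    by (rule lipschitz_on_continuous_on[of "3/2"])
       (use P_bilipschitz_bounds(2)[OF assms] in \<open>auto simp: lipschitz_on_def dist_real_def\<close>)
  have "\<exists>x. 0 \<le> x \<and> x \<le> y \<and> P t x = y"
    using y P_ge[of t y] assms by (intro IVT' continuous_on_subset[OF cont]) auto
  then show "y \<in> P t ` {0..}" by force
qed

section \<open>The density given by characteristics\<close>

abbreviation Q :: "real \<Rightarrow> real \<Rightarrow> real" where "Q t \<equiv> inv_into {0..} (P t)"

lemma Q_nonneg: "0 \<le> t \<Longrightarrow> t \<le> T0 \<Longrightarrow> 0 \<le> \<rho> \<Longrightarrow> 0 \<le> Q t \<rho>"
  using bij_betwE[OF bij_betw_inv_into[OF bij_betw_P]] by auto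

lemma P_Q: "0 \<le> t \<Longrightarrow> t \<le> T0 \<Longrightarrow> 0 \<le> \<rho> \<Longrightarrow> P t (Q t \<rho>) = \<rho>"
  using bij_betw_inv_into_right[OF bij_betw_P] by auto

lemma Q_P: "0 \<le> t \<Longrightarrow> t \<le> T0 \<Longrightarrow> 0 \<le> s \<Longrightarrow> Q t (P t s) = s"
  using inv_into_f_f[OF inj_on_P] by simp

lemma Q_0: "0 \<le> t \<Longrightarrow> t \<le> T0 \<Longrightarrow> Q t 0 = 0"
  using Q_P[of t 0] by simp

lemma Q_diff_le:
  assumes "0 \<le> t" "t \<le> T0" "0 \<le> t'" "t' \<le> T0" "0 \<le> \<rho>" "0 \<le> \<rho>'"
  shows "\<bar>Q t \<rho> - Q t' \<rho>'\<bar> \<le> 2 * \<bar>\<rho> - \<rho>'\<bar> + 2 * \<alpha> * (Mb * B powr (\<alpha> - 1)) * \<bar>t - t'\<bar>"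
proof -
  define s s' where "s = Q t \<rho>" and "s' = Q t' \<rho>'"
  have s: "0 \<le> s" "P t s = \<rho>" and s': "0 \<le> s'" "P t' s' = \<rho>'"
    using Q_nonneg P_Q assms by (auto simp: s_def s'_def)
  have "\<bar>s - s'\<bar> / 2 \<le> \<bar>P t s - P t s'\<bar>"
    by (rule P_bilipschitz_bounds(1)[OF assms(1,2) s(1) s'(1)])
  also have "P t s - P t s' = (\<rho> - \<rho>') - \<alpha> * speed s' * (t - t')"
    using s s' by (simp add: P_eq algebra_simps)
  also have "\<bar>\<dots>\<bar> \<le> \<bar>\<rho> - \<rho>'\<bar> + \<alpha> * speed s' * \<bar>t - t'\<bar>"
    using abs_triangle_ineq4[of "\<rho> - \<rho>'" "\<alpha> * speed s' * (t - t')"] alpha_gt_1 speed_nonneg[OF s'(1)]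
    by (simp add: abs_mult)
  also have "\<dots> \<le> \<bar>\<rho> - \<rho>'\<bar> + \<alpha> * (Mb * B powr (\<alpha> - 1)) * \<bar>t - t'\<bar>"
    using alpha_gt_1 speed_le[OF s'(1)] by (simp add: mult_right_mono)
  finally show ?thesis by (simp add: s_def s'_def)
qed

definition LQ :: real where "LQ = 2 + 2 * \<alpha> * (Mb * B powr (\<alpha> - 1))"

lemma LQ_pos: "0 < LQ"
  using alpha_gt_1 Mb_nonneg by (simp add: LQ_def add_pos_nonneg)

lemma lipschitz_on_Q: "LQ-lipschitz_on ({0..T0} \<times> {0..}) (\<lambda>p. Q (fst p) (snd p))"
proof (rule lipschitz_onI)
  fix p p' :: "real \<times> real" assume "p \<in> {0..T0} \<times> {0..}" "p' \<in> {0..T0} \<times> {0..}"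
  then have "\<bar>Q (fst p) (snd p) - Q (fst p') (snd p')\<bar>
      \<le> 2 * \<bar>snd p - snd p'\<bar> + 2 * \<alpha> * (Mb * B powr (\<alpha> - 1)) * \<bar>fst p - fst p'\<bar>"
    by (intro Q_diff_le) auto
  also have "\<dots> \<le> 2 * dist p p' + 2 * \<alpha> * (Mb * B powr (\<alpha> - 1)) * dist p p'"
    using dist_fst_le[of p p'] dist_snd_le[of p p'] alpha_gt_1 Mb_nonneg
    by (intro add_mono mult_left_mono) (auto simp: dist_real_def)
  finally show "dist (Q (fst p) (snd p)) (Q (fst p') (snd p')) \<le> LQ * dist p p'"
    by (simp add: LQ_def dist_real_def algebra_simps)
qed (use LQ_pos in simp)

lemma continuous_on_Q: "continuous_on ({0..T0} \<times> {0..}) (\<lambda>p. Q (fst p) (snd p))"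
  using lipschitz_on_continuous_on[OF lipschitz_on_Q] .

lemma continuous_on_u0_Q: "continuous_on ({0..T0} \<times> {0..}) (\<lambda>p. u0 (Q (fst p) (snd p)))"
  by (rule continuous_on_compose2[OF continuous_on_u0 continuous_on_Q])
     (auto intro: Q_nonneg)

lemma continuous_on_weight:
  "continuous_on ({0..T0} \<times> {0..}) (\<lambda>p. 1 + \<alpha> * fst p * u0 (Q (fst p) (snd p)) powr \<alpha>)"
  using u0_nonneg Q_nonneg alpha_gt_1
  by (intro continuous_intros continuous_on_powr' continuous_on_u0_Q) auto

lemma weight_pos:
  "p \<in> {0..T0} \<times> {0..} \<Longrightarrow> 0 < 1 + \<alpha> * fst p * u0 (Q (fst p) (snd p)) powr \<alpha>"
  using alpha_gt_1 by (intro add_pos_nonneg) auto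

text \<open>The density along a characteristic, (v^-\<alpha> + \<alpha> t)^(-1/\<alpha>), rewritten so that it
  extends continuously by 0 to v = 0.\<close>
definition U :: "real \<Rightarrow> real \<Rightarrow> real" where
  "U t v = v * (1 + \<alpha> * t * v powr \<alpha>) powr (- 1 / \<alpha>)"

lemma U_nonneg: "0 \<le> t \<Longrightarrow> 0 \<le> v \<Longrightarrow> 0 \<le> U t v"
  by (simp add: U_def)

lemma U_eq_powr:
  assumes "0 \<le> t" "0 < v"
  shows "(v powr (- \<alpha>) + \<alpha> * t) powr (- 1 / \<alpha>) = U t v"
proof -
  have "v powr (- \<alpha>) + \<alpha> * t = v powr (- \<alpha>) * (1 + \<alpha> * t * v powr \<alpha>)"
    using assms by (simp add: powr_minus field_simps)
  moreover have "(v powr (- \<alpha>)) powr (- 1 / \<alpha>) = v"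
    using alpha_gt_1 assms by (simp add: powr_powr)
  ultimately show ?thesis
    using assms alpha_gt_1 by (simp add: powr_mult U_def)
qed

lemma charsol_eq:
  assumes "0 \<le> t" "t \<le> T0" "0 \<le> \<rho>"
  shows "charsol \<alpha> u0 t \<rho> = U t (u0 (Q t \<rho>))"
  using U_eq_powr[OF assms(1), of "u0 (Q t \<rho>)"] u0_nonneg[OF Q_nonneg[OF assms]]
  unfolding charsol_def Let_def by (cases "u0 (Q t \<rho>) = 0") (auto simp: U_def)

lemma continuous_on_charsol:
  "continuous_on ({0..T0} \<times> {0..}) (\<lambda>(t, \<rho>). charsol \<alpha> u0 t \<rho>)"
proof -
  have "continuous_on ({0..T0} \<times> {0..}) (\<lambda>p. U (fst p) (u0 (Q (fst p) (snd p))))"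
    unfolding U_def using weight_pos
    by (intro continuous_on_mult continuous_on_u0_Q continuous_on_powr continuous_on_weight
        continuous_on_const) force+
  then show ?thesis
    by (rule continuous_on_eq) (auto simp: charsol_eq)
qed

section \<open>The mass along characteristics\<close>

definition \<gamma> :: real where "\<gamma> = (\<alpha> - 1) / \<alpha>"

definition \<beta> :: real where "\<beta> = \<alpha> / (\<alpha> - 1)"

lemma beta_gt_1: "\<beta> > 1"
  using alpha_gt_1 by (simp add: \<beta>_def)

lemma pos_powr_g: "s \<ge> 0 \<Longrightarrow> pos_powr \<beta> (g s) = u0 s powr \<alpha>"
  using u0_nonneg[of s] alpha_gt_1
  by (cases "u0 s = 0") (auto simp: pos_powr_def g_def powr_powr \<beta>_def)

text \<open>The closed form of the mass m(t, P t s) along the characteristic through s.\<close>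
definition M :: "real \<Rightarrow> real \<Rightarrow> real" where
  "M t \<rho> = m0 (Q t \<rho>) * (1 + \<alpha> * t * u0 (Q t \<rho>) powr \<alpha>) powr \<gamma>"

lemma M_0: "0 \<le> t \<Longrightarrow> t \<le> T0 \<Longrightarrow> M t 0 = 0"
  by (simp add: M_def Q_0)

lemma continuous_on_M: "continuous_on ({0..T0} \<times> {0..}) (\<lambda>p. M (fst p) (snd p))"
proof -
  have "continuous_on ({0..T0} \<times> {0..}) (\<lambda>p. m0 (Q (fst p) (snd p)))"
    by (rule continuous_on_compose2[OF continuous_on_m0 continuous_on_Q]) (auto intro: Q_nonneg)
  then show ?thesis
    unfolding M_def using weight_pos
    by (intro continuous_on_mult continuous_on_powr continuous_on_weight continuous_on_const) force+
qed

text \<open>M with (Q t \<rho>, g (Q t \<rho>)) replaced by an independent pair (s, G) and the constraint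
  \<rho> = P t s added with a multiplier \<kappa>; u0(s)^\<alpha> is recovered as pos_powr \<beta> G, which is
  differentiable also at G = 0. For \<kappa> = u(t, \<rho>) the partial derivatives in (s, G) vanish at
  the foot of the characteristic, so the merely Lipschitz dependence of the foot on (t, \<rho>)
  does not spoil the differentiability of M.\<close>
definition Psi :: "real \<Rightarrow> (real \<times> real) \<times> (real \<times> real) \<Rightarrow> real" where
  "Psi \<kappa> z = m0 (fst (snd z)) * (1 + \<alpha> * fst (fst z) * pos_powr \<beta> (snd (snd z))) powr \<gamma>
     + \<kappa> * (snd (fst z) - (fst (snd z) + \<alpha> * m0 (fst (snd z)) * snd (snd z) * fst (fst z)))"

definition foot :: "real \<times> real \<Rightarrow> real \<times> real" where
  "foot p = (Q (fst p) (snd p), g (Q (fst p) (snd p)))"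

lemma Psi_foot:
  assumes "p \<in> {0..T0} \<times> {0..}"
  shows "Psi \<kappa> (p, foot p) = M (fst p) (snd p)"
proof -
  have "P (fst p) (Q (fst p) (snd p)) = snd p"
    using assms P_Q by auto
  then show ?thesis
    using assms pos_powr_g Q_nonneg
    by (auto simp: Psi_def foot_def M_def P_eq speed_def)
qed

lemma foot_lipschitz:
  assumes "p \<in> {0..T0} \<times> {0..}" "p' \<in> {0..T0} \<times> {0..}"
  shows "norm (foot p' - foot p) \<le> LQ * (1 + Lg) * norm (p' - p)"
proof -
  let ?s = "Q (fst p) (snd p)" and ?s' = "Q (fst p') (snd p')"
  have s: "0 \<le> ?s" "0 \<le> ?s'" using assms Q_nonneg by auto
  have "norm (foot p' - foot p) \<le> norm (?s' - ?s) + norm (g ?s' - g ?s)"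
    using norm_Pair_le[of "?s' - ?s" "g ?s' - g ?s"] by (simp add: foot_def)
  also have "\<dots> \<le> (1 + Lg) * \<bar>?s' - ?s\<bar>"
    using g_lipschitz[OF s(2) s(1)] by (simp add: algebra_simps)
  also have "\<dots> \<le> (1 + Lg) * (LQ * norm (p' - p))"
    using lipschitz_onD[OF lipschitz_on_Q assms(2,1)] Lg_nonneg
    by (intro mult_left_mono) (auto simp: dist_real_def dist_norm)
  finally show ?thesis by (simp add: algebra_simps)
qed

lemma Psi_has_derivative:
  fixes s t \<rho> G \<kappa> :: real
  assumes "s > 0" "t \<ge> 0"
  defines "w \<equiv> 1 + \<alpha> * t * pos_powr \<beta> G"
    and "dG \<equiv> (if G \<le> 0 then 0 else \<beta> * G powr (\<beta> - 1))"
  shows "(Psi \<kappa> has_derivative (\<lambda>h. fst (snd h) * u0 s * w powr \<gamma>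
      + m0 s * (\<gamma> * w powr (\<gamma> - 1) * (\<alpha> * (fst (fst h) * pos_powr \<beta> G + t * (snd (snd h) * dG))))
      + \<kappa> * (snd (fst h) - (fst (snd h) + \<alpha> * (fst (snd h) * u0 s * G * t
          + m0 s * snd (snd h) * t + m0 s * G * fst (fst h))))))
     (at ((t, \<rho>), (s, G)))"
proof -
  let ?z = "((t, \<rho>), (s, G))"
  have m0': "((\<lambda>z. m0 (fst (snd z))) has_derivative (\<lambda>h. fst (snd h) * u0 s)) (at ?z)"
    using DERIV_compose_FDERIV[OF _ has_derivative_fst[OF has_derivative_snd[OF has_derivative_ident]],
        of m0 "u0 s" ?z UNIV] m0_has_real_derivative[OF assms(1)]
    by simp
  have pos_powr': "((\<lambda>z. pos_powr \<beta> (snd (snd z))) has_derivative (\<lambda>h. snd (snd h) * dG)) (at ?z)"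
    using DERIV_compose_FDERIV[OF _ has_derivative_snd[OF has_derivative_snd[OF has_derivative_ident]],
        of "pos_powr \<beta>" dG ?z UNIV] pos_powr_has_real_derivative[OF beta_gt_1, of G]
    by (simp add: dG_def)
  have w: "w > 0"
    unfolding w_def using assms(2) alpha_gt_1 pos_powr_nonneg by (intro add_pos_nonneg) auto
  show ?thesis
    unfolding Psi_def[abs_def]
    apply (rule has_derivative_eq_rhs)
     apply (rule derivative_eq_intros m0' pos_powr' refl | simp add: w w_def[symmetric])+
    using w by (intro ext) (simp add: powr_diff field_simps)
qed

text \<open>The coefficients of the s- and G-increments in the derivative of Psi vanish, and the
  coefficient of the t-increment is -M u^\<alpha>.\<close>
lemma foot_derivative_identities:
  fixes v t m :: real
  assumes v: "v \<ge> 0" and t: "t \<ge> 0"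
  defines "w \<equiv> 1 + \<alpha> * t * v powr \<alpha>"
    and "G \<equiv> v powr (\<alpha> - 1)"
  shows "v * w powr \<gamma> = U t v * (1 + \<alpha> * v * G * t)"
    and "\<gamma> * w powr (\<gamma> - 1) * (if G \<le> 0 then 0 else \<beta> * G powr (\<beta> - 1)) = U t v"
    and "m * (\<gamma> * w powr (\<gamma> - 1) * \<alpha> * v powr \<alpha>) - U t v * \<alpha> * m * G
           = - (m * w powr \<gamma>) * U t v powr \<alpha>"
proof -
  have w: "w > 0" unfolding w_def using alpha_gt_1 t v by (simp add: add_pos_nonneg)
  define \<omega> where "\<omega> = w powr (- 1 / \<alpha>)"
  have U: "U t v = v * \<omega>" by (simp add: U_def \<omega>_def w_def)
  have \<gamma>: "\<gamma> = 1 - 1 / \<alpha>" using alpha_gt_1 by (simp add: \<gamma>_def field_simps)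
  have w_\<gamma>: "w powr \<gamma> = w * \<omega>"
    using w by (simp add: \<gamma> \<omega>_def powr_diff powr_minus divide_inverse)
  have w_\<gamma>1: "w powr (\<gamma> - 1) = \<omega>" by (simp add: \<gamma> \<omega>_def)
  have vG: "v * G = v powr \<alpha>"
    using v alpha_gt_1 by (cases "v = 0") (auto simp: G_def powr_mult_base)
  have w_vG: "w = 1 + \<alpha> * v * G * t"
    unfolding w_def by (simp add: vG[symmetric] algebra_simps)
  show "v * w powr \<gamma> = U t v * (1 + \<alpha> * v * G * t)"
    unfolding U w_\<gamma> w_vG[symmetric] by (simp add: ac_simps)
  show "\<gamma> * w powr (\<gamma> - 1) * (if G \<le> 0 then 0 else \<beta> * G powr (\<beta> - 1)) = U t v"
  proof (cases "v = 0")
    case False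
    then have "G > 0" and "G powr (\<beta> - 1) = v" and "\<gamma> * \<beta> = 1"
      using v alpha_gt_1 by (auto simp: G_def powr_powr \<beta>_def \<gamma>_def field_simps)
    then show ?thesis by (simp add: w_\<gamma>1 U)
  qed (use alpha_gt_1 in \<open>simp add: G_def U_def\<close>)
  have "U t v powr \<alpha> = v powr \<alpha> * w powr (- 1 / \<alpha> * \<alpha>)"
    using v by (simp add: U_def w_def powr_mult powr_powr)
  also have "\<dots> = v powr \<alpha> / w" using alpha_gt_1 w by (simp add: powr_minus divide_inverse)
  finally have U_\<alpha>: "U t v powr \<alpha> = v powr \<alpha> / w" .
  show "m * (\<gamma> * w powr (\<gamma> - 1) * \<alpha> * v powr \<alpha>) - U t v * \<alpha> * m * G
          = - (m * w powr \<gamma>) * U t v powr \<alpha>"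
    unfolding w_\<gamma>1 w_\<gamma> U_\<alpha> using w alpha_gt_1 vG
    by (simp add: U \<gamma> field_simps flip: vG)
qed

lemma Psi_has_derivative_at_foot:
  fixes t s \<rho> :: real
  assumes t: "0 \<le> t" and s: "0 < s"
  defines "v \<equiv> u0 s"
  shows "(Psi (U t v) has_derivative
           (\<lambda>z. - (m0 s * (1 + \<alpha> * t * v powr \<alpha>) powr \<gamma>) * U t v powr \<alpha> * fst (fst z)
                + U t v * snd (fst z)))
         (at ((t, \<rho>), (s, g s)))"
proof -
  define w where "w = 1 + \<alpha> * t * v powr \<alpha>"
  define \<kappa> where "\<kappa> = U t v"
  define G where "G = v powr (\<alpha> - 1)"
  have v: "0 \<le> v" using s u0_nonneg by (simp add: v_def)
  have g_s: "g s = G" and pos_powr_G: "pos_powr \<beta> G = v powr \<alpha>"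
    using pos_powr_g[of s] s by (simp_all add: G_def g_def v_def)
  note ids = foot_derivative_identities(1,2)[OF v t, folded w_def G_def \<kappa>_def]
    foot_derivative_identities(3)[OF v t, of "m0 s", folded w_def G_def \<kappa>_def]
  show ?thesis
    unfolding g_s \<kappa>_def[symmetric] w_def[symmetric]
  proof (rule has_derivative_eq_rhs[OF Psi_has_derivative[OF s t, where G = G and \<rho> = \<rho>]],
      rule ext)
    fix h :: "(real \<times> real) \<times> (real \<times> real)"
    obtain a b c d where h: "h = ((a, b), (c, d))" by (metis prod.collapse)
    let ?dG = "if G \<le> 0 then 0 else \<beta> * G powr (\<beta> - 1)"
    have "c * v * w powr \<gamma> + m0 s * (\<gamma> * w powr (\<gamma> - 1) * (\<alpha> * (a * v powr \<alpha> + t * (d * ?dG))))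
          + \<kappa> * (b - (c + \<alpha> * (c * v * G * t + m0 s * d * t + m0 s * G * a)))
        = c * (v * w powr \<gamma> - \<kappa> * (1 + \<alpha> * v * G * t))
          + m0 s * \<alpha> * t * d * (\<gamma> * w powr (\<gamma> - 1) * ?dG - \<kappa>)
          + a * (m0 s * (\<gamma> * w powr (\<gamma> - 1) * \<alpha> * v powr \<alpha>) - \<kappa> * \<alpha> * m0 s * G) + \<kappa> * b"
      by (simp add: algebra_simps)
    also have "\<dots> = - (m0 s * w powr \<gamma>) * \<kappa> powr \<alpha> * a + \<kappa> * b"
      using ids by simp
    finally show "fst (snd h) * u0 s * (1 + \<alpha> * t * pos_powr \<beta> G) powr \<gamma>
      + m0 s * (\<gamma> * (1 + \<alpha> * t * pos_powr \<beta> G) powr (\<gamma> - 1) * (\<alpha> * (fst (fst h) * pos_powr \<beta> G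
          + t * (snd (snd h) * ?dG))))
      + \<kappa> * (snd (fst h) - (fst (snd h) + \<alpha> * (fst (snd h) * u0 s * G * t
          + m0 s * snd (snd h) * t + m0 s * G * fst (fst h))))
      = - (m0 s * w powr \<gamma>) * \<kappa> powr \<alpha> * fst (fst h) + \<kappa> * snd (fst h)"
      by (simp add: h pos_powr_G w_def[symmetric] v_def[symmetric])
  qed
qed

lemma M_has_derivative:
  assumes p: "p \<in> {0<..T0} \<times> {0<..}"
  shows "((\<lambda>p. M (fst p) (snd p)) has_derivative
           (\<lambda>h. - M (fst p) (snd p) * charsol \<alpha> u0 (fst p) (snd p) powr \<alpha> * fst h
                + charsol \<alpha> u0 (fst p) (snd p) * snd h))
         (at p within {0<..T0} \<times> {0<..})"
proof -
  let ?S = "{0<..T0} \<times> {0::real<..}"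
  obtain t \<rho> where p_eq: "p = (t, \<rho>)" and t: "0 < t" "t \<le> T0" and \<rho>: "0 < \<rho>"
    using p by auto
  define s where "s = Q t \<rho>"
  have "0 \<le> s" "P t s = \<rho>" using Q_nonneg P_Q t \<rho> by (auto simp: s_def)
  with \<rho> have s: "0 < s" by (cases "s = 0") auto
  have u: "charsol \<alpha> u0 t \<rho> = U t (u0 s)" using charsol_eq t \<rho> by (simp add: s_def)
  have M: "M t \<rho> = m0 s * (1 + \<alpha> * t * u0 s powr \<alpha>) powr \<gamma>" by (simp add: M_def s_def)
  have "((\<lambda>p. Psi (U t (u0 s)) (p, foot p)) has_derivative
          (\<lambda>h. - M t \<rho> * charsol \<alpha> u0 t \<rho> powr \<alpha> * fst h + charsol \<alpha> u0 t \<rho> * snd h))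
        (at (t, \<rho>) within ?S)"
  proof (rule has_derivative_along_lipschitz_graph[where K = "LQ * (1 + Lg)"])
    show "(Psi (U t (u0 s)) has_derivative
            (\<lambda>z. - M t \<rho> * charsol \<alpha> u0 t \<rho> powr \<alpha> * fst (fst z)
                 + charsol \<alpha> u0 t \<rho> * snd (fst z)))
          (at ((t, \<rho>), foot (t, \<rho>)))"
      using Psi_has_derivative_at_foot[of t s \<rho>] t s by (simp add: foot_def u M s_def)
    show "\<forall>p\<in>?S. norm (foot p - foot (t, \<rho>)) \<le> LQ * (1 + Lg) * norm (p - (t, \<rho>))"
      using foot_lipschitz t \<rho> by force
  qed (rule bounded_linear_intros | use LQ_pos Lg_nonneg in simp)+
  then show ?thesis
    unfolding p_eq fst_conv snd_conv
    by (rule has_derivative_transform_within[OF _ zero_less_one])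
       (use t \<rho> in \<open>auto simp: Psi_foot\<close>)
qed

lemma mass_charsol_eq_M:
  assumes t: "0 < t" "t \<le> T0" and \<rho>: "0 \<le> \<rho>"
  shows "mass (charsol \<alpha> u0) t \<rho> = M t \<rho>"
proof -
  have "continuous_on {0..\<rho>} ((\<lambda>p. M (fst p) (snd p)) \<circ> (\<lambda>x. (t, x)))"
    by (rule continuous_on_compose[OF _ continuous_on_subset[OF continuous_on_M]])
       (use t in \<open>auto intro!: continuous_intros\<close>)
  then have cont: "continuous_on {0..\<rho>} (M t)" by (simp add: o_def)
  have "(M t has_vector_derivative charsol \<alpha> u0 t x) (at x)" if x: "x \<in> {0<..<\<rho>}" for x
  proof -
    have pair: "((\<lambda>x. (t, x)) has_derivative (\<lambda>h. (0, h))) (at x within {0<..})"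
      by (auto intro!: derivative_eq_intros)
    have sub: "(\<lambda>x. (t, x)) ` {0<..} \<subseteq> {0<..T0} \<times> {0<..}" using t by auto
    have "(M t has_derivative (\<lambda>h. charsol \<alpha> u0 t x * h)) (at x within {0<..})"
      using has_derivative_in_compose2[OF M_has_derivative sub _ pair] x by simp
    then show ?thesis
      using x by (simp add: has_vector_derivative_def at_within_open[of x "{0<..}"] mult.commute)
  qed
  from fundamental_theorem_of_calculus_interior[OF \<rho> cont this]
  show ?thesis using M_0[of t] t by (simp add: mass_def integral_unique)
qed

lemma classical_solution_on_mass:
  "classical_solution_on \<alpha> ({0<..T0} \<times> {0<..}) (mass (charsol \<alpha> u0))"
proof -
  let ?S = "{0<..T0} \<times> {0::real<..}"
  let ?u = "\<lambda>p. charsol \<alpha> u0 (fst p) (snd p)"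
  let ?mt = "\<lambda>p. - M (fst p) (snd p) * ?u p powr \<alpha>"
  have S: "?S \<subseteq> {0..T0} \<times> {0..}" by auto
  have u_cont: "continuous_on ?S ?u"
    using continuous_on_subset[OF continuous_on_charsol S] by (simp add: split_beta')
  have "?u p \<ge> 0" if "p \<in> ?S" for p
    using that charsol_eq u0_nonneg Q_nonneg by (auto intro!: U_nonneg)
  then have mt_cont: "continuous_on ?S ?mt"
    using alpha_gt_1
    by (intro continuous_intros continuous_on_powr' u_cont continuous_on_subset[OF continuous_on_M S])
       auto
  have mass_M: "mass (charsol \<alpha> u0) (fst q) (snd q) = M (fst q) (snd q)" if "q \<in> ?S" for q
    using that by (intro mass_charsol_eq_M) auto
  have "((\<lambda>(t, \<rho>). mass (charsol \<alpha> u0) t \<rho>) has_derivative (\<lambda>(h, k). ?mt p * h + ?u p * k))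
          (at p within ?S)" if p: "p \<in> ?S" for p
  proof -
    have "((\<lambda>p. mass (charsol \<alpha> u0) (fst p) (snd p)) has_derivative
            (\<lambda>h. ?mt p * fst h + ?u p * snd h)) (at p within ?S)"
      by (rule has_derivative_transform_within[OF M_has_derivative[OF p] zero_less_one p])
         (simp add: mass_M)
    then show ?thesis by (simp add: split_beta')
  qed
  moreover have "?mt p + mass (charsol \<alpha> u0) (fst p) (snd p) * ?u p powr \<alpha> = 0" if "p \<in> ?S" for p
    using mass_M[OF that] by simp
  ultimately show ?thesis
    unfolding classical_solution_on_def using u_cont mt_cont by blast
qed

lemma mass_charsol_initial: "0 \<le> \<rho> \<Longrightarrow> mass (charsol \<alpha> u0) 0 \<rho> = mass0 u0 \<rho>"
  unfolding mass_def mass0_def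
  using T0_pos charsol_eq[of 0] Q_P[of 0] by (intro integral_cong) (simp add: P_eq U_def)

end

lemma characteristics_of_data:
  fixes \<alpha> :: real and u0 :: "real \<Rightarrow> real"
  assumes "\<alpha> > 1" "\<forall>\<rho>\<ge>0. u0 \<rho> \<ge> 0" "bounded (u0 ` {0..})" "u0 integrable_on {0..}"
    and "Lg-lipschitz_on {0..} (\<lambda>\<rho>. u0 \<rho> powr (\<alpha> - 1))"
  obtains B Mb where "characteristics \<alpha> u0 B Lg Mb"
proof -
  obtain B where B: "\<forall>x\<in>u0 ` {0..}. norm x \<le> B" using assms(3) by (auto simp: bounded_iff)
  have "mass0 u0 \<rho> \<le> integral {0..} u0" if "\<rho> \<ge> 0" for \<rho>
    unfolding mass0_def
    by (rule integral_subset_le) (use assms(2,4) that in \<open>auto intro: integrable_on_subinterval\<close>)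
  with assms B have "characteristics \<alpha> u0 B Lg (integral {0..} u0)"
    by unfold_locales auto
  then show thesis by (rule that)
qed

theorem mainTheorem2:
  fixes \<alpha> :: real and u0 :: "real \<Rightarrow> real"
  assumes "\<alpha> > 1"
    and "\<forall>\<rho>\<ge>0. u0 \<rho> \<ge> 0"
    and "bounded (u0 ` {0..})"
    and "u0 integrable_on {0..}"
    and "\<exists>L. L-lipschitz_on {0..} (\<lambda>\<rho>. u0 \<rho> powr (\<alpha> - 1))"
  shows "\<exists>T>0. (\<forall>t\<in>{0..T}. bij_betw (charmap \<alpha> u0 t) {0..} {0..}
                          \<and> bilipschitz_on {0..} (charmap \<alpha> u0 t))
           \<and> continuous_on ({0..T} \<times> {0..}) (\<lambda>(t, \<rho>). charsol \<alpha> u0 t \<rho>)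
           \<and> classical_solution_on \<alpha> ({0<..T} \<times> {0<..}) (mass (charsol \<alpha> u0))
           \<and> (\<forall>\<rho>\<ge>0. mass (charsol \<alpha> u0) 0 \<rho> = mass0 u0 \<rho>)
           \<and> (\<forall>t\<in>{0..T}. mass (charsol \<alpha> u0) t 0 = 0)"
proof -
  obtain Lg where "Lg-lipschitz_on {0..} (\<lambda>\<rho>. u0 \<rho> powr (\<alpha> - 1))"
    using assms(5) by blast
  then obtain B Mb where "characteristics \<alpha> u0 B Lg Mb"
    using characteristics_of_data[OF assms(1-4)] by blast
  then interpret characteristics \<alpha> u0 B Lg Mb .
  have "\<forall>t\<in>{0..T0}. bij_betw (P t) {0..} {0..} \<and> bilipschitz_on {0..} (P t)"
    using bij_betw_P bilipschitz_on_P by auto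
  then show ?thesis
    using T0_pos continuous_on_charsol classical_solution_on_mass mass_charsol_initial
    by (auto simp: mass_def)
qed

end
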